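(* Let $d_R\ge2$, let the glue code $H_G$ be compatible with the memory via $S,T$ and finely devised for $\Sigma$, and let $\gamma$ satisfy $J_{X,C}S^{\mathrm T}=\gamma H_G$. Let $P=P_{M\text{-}M}$ be the matrix such that $xP$ places $x\in\mathbb F_2^n$ on block $u_0$ and zeros elsewhere (so $yP^{\mathrm T}$ is the restriction of $y$ to $u_0$). Then $\mathrm{rs}H_X=\mathrm{rs}(H^{M\text{-}M}_XP^{\mathrm T})$, $\mathrm{rs}(H_ZP)\subseteq\mathrm{rs}H^{M\text{-}M}_Z$, $\mathrm{rs}J_{X,C}=\mathrm{rs}(J^{M\text{-}M}_XP^{\mathrm T})$, $\mathrm{rs}(J_{Z,C}P)=\mathrm{rs}J^{M\text{-}M}_Z$, and $\mathrm{rs}(J_{Z,A}P)\subseteq\mathrm{rs}H^{M\text{-}M}_Z$.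
   Context: All vectors are row vectors over $\mathbb F_2$; $\mathrm{rs}A$ is the row space, $\ker A=\{x:Ax^{\mathrm T}=0\}$, $VM=\{vM:v\in V\}$, $E_m$ the identity. The memory is a CSS subsystem code specified by $H_X\in\mathbb F_2^{r_X\times n}$, $H_Z\in\mathbb F_2^{r_Z\times n}$, $J_X,J_Z\in\mathbb F_2^{k\times n}$, $F_X,F_Z\in\mathbb F_2^{k_g\times n}$ satisfying $\ker H_X=\mathrm{rs}H_Z\oplus\mathrm{rs}J_Z\oplus\mathrm{rs}F_Z$, $\ker H_Z=\mathrm{rs}H_X\oplus\mathrm{rs}J_X\oplus\mathrm{rs}F_X$, $J_XJ_Z^{\mathrm T}=E_k$, $F_XF_Z^{\mathrm T}=E_{k_g}$. Let $v_1,\dots,v_q\in\mathrm{rs}J_Z$ be linearly independent (representing $\Sigma$), $J_{Z,A}$ the matrix with rows $v_1,\dots,v_q$; extend to a basis $v_1,\dots,v_k$ of $\mathrm{rs}J_Z$ and let $J_{Z,C}$ have rows $v_{q+1},\dots,v_k$. Let $\bar J_Z$ be the invertible $k\times k$ matrix with $\binom{J_{Z,A}}{J_{Z,C}}=\bar J_ZJ_Z$ and define $J_{X,A}\in\mathbb F_2^{q\times n}$, $J_{X,C}\in\mathbb F_2^{(k-q)\times n}$ by $\binom{J_{X,A}}{J_{X,C}}=(\bar J_Z^{-1})^{\mathrm T}J_X$. A glue code $H_G\in\mathbb F_2^{r_G\times n_G}$ is compatible via pasting matrices $S\in\mathbb F_2^{n_G\times n}$, $T\in\mathbb F_2^{r_X\times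 r_G}$ if $H_XS^{\mathrm T}=TH_G$; it is finely devised for $\Sigma$ if there exist $u_1,u_2,\dots\in\mathrm{rs}H_Z\oplus\mathrm{rs}F_Z$ with $\mathrm{span}(v_1,\dots,v_q,u_1,u_2,\dots)=(\ker H_G)S$. Measurement-sticker deformed code: coordinates are split into blocks $u_0\in\mathbb F_2^n$, $u_1,\dots,u_{d_R-1}\in\mathbb F_2^{n_G}$, $w_1,\dots,w_{d_R}\in\mathbb F_2^{r_G}$. $H^{M\text{-}M}_X$ has row-block $0$ equal to $H_X$ on $u_0$ and $T$ on $w_1$, and for $1\le j\le d_R-1$ row-block $j$ equal to $H_G$ on $u_j$, $E_{r_G}$ on $w_j$ and $E_{r_G}$ on $w_{j+1}$ (zero elsewhere). $H^{M\text{-}M}_Z$ has row-block $0$ equal to $H_Z$ on $u_0$, and for $1\le i\le d_R$ row-block $i$ equal to $S$ on $u_0$ (only if $i=1$), $E_{n_G}$ on $u_{i-1}$ (only if $i\ge2$), $E_{n_G}$ on $u_i$ (only if $i\le d_R-1$), and $H_G^{\mathrm T}$ on $w_i$. $J^{M\text{-}M}_X$ equals $J_{X,C}$ on $u_0$, $J_{X,C}S^{\mathrm T}$ on each of $u_1,\dots,u_{d_R-1}$, $0$ on $w_1,\dots,w_{d_R-1}$ and $\gamma$ on $w_{d_R}$; $J^{M\text{-}M}_Z$ equals $J_{Z,C}$ on $u_0$ and $0$ elsewhere. *)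

theory Defs
  imports "HOL-Library.Z2" "Jordan_Normal_Form.Matrix"
begin

text \<open>Vectors are row vectors over F_2 (type bit). The product x M of a row
vector x with a matrix M is the column-product of the transpose with x.\<close>

definition vm :: "'a::comm_semiring_0 vec \<Rightarrow> 'a mat \<Rightarrow> 'a vec" where
  "vm x M = transpose_mat M *\<^sub>v x"

definition rs :: "'a::comm_semiring_0 mat \<Rightarrow> 'a vec set" where
  "rs A = {vm v A | v. v \<in> carrier_vec (dim_row A)}"

definition kerm :: "'a::comm_semiring_0 mat \<Rightarrow> 'a vec set" where
  "kerm A = {x \<in> carrier_vec (dim_col A). A *\<^sub>v x = 0\<^sub>v (dim_row A)}"

definition set_sum :: "'a::plus vec set \<Rightarrow> 'a vec set \<Rightarrow> 'a vec set" where
  "set_sum A B = {a + b | a b. a \<in> A \<and> b \<in> B}"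

definition direct_sum3 :: "nat \<Rightarrow> 'a::comm_ring_1 vec set \<Rightarrow> 'a vec set \<Rightarrow> 'a vec set \<Rightarrow> 'a vec set \<Rightarrow> bool" where
  "direct_sum3 n V A B C \<longleftrightarrow>
     V = set_sum (set_sum A B) C \<and>
     (\<forall>a\<in>A. \<forall>b\<in>B. \<forall>c\<in>C. a + b + c = 0\<^sub>v n \<longrightarrow> a = 0\<^sub>v n \<and> b = 0\<^sub>v n \<and> c = 0\<^sub>v n)"

text \<open>Generic block matrices: nbr row blocks with sizes rsz 0, ..., rsz (nbr-1),
nbc column blocks with sizes csz 0, ..., and block (i,j) given by B i j
(which must be of size rsz i x csz j).\<close>

definition boff :: "(nat \<Rightarrow> nat) \<Rightarrow> nat \<Rightarrow> nat" where
  "boff sz i = (\<Sum>l<i. sz l)"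

definition bidx :: "(nat \<Rightarrow> nat) \<Rightarrow> nat \<Rightarrow> nat \<Rightarrow> nat" where
  "bidx sz nb r = (THE i. i < nb \<and> boff sz i \<le> r \<and> r < boff sz (Suc i))"

definition block_mat :: "nat \<Rightarrow> (nat \<Rightarrow> nat) \<Rightarrow> nat \<Rightarrow> (nat \<Rightarrow> nat) \<Rightarrow> (nat \<Rightarrow> nat \<Rightarrow> 'a mat) \<Rightarrow> 'a mat" where
  "block_mat nbr rsz nbc csz B =
     mat (boff rsz nbr) (boff csz nbc)
       (\<lambda>(r, c). let i = bidx rsz nbr r; j = bidx csz nbc c
                 in B i j $$ (r - boff rsz i, c - boff csz j))"

text \<open>Column blocks of the measurement-sticker deformed code, in the order
u_0, u_1, ..., u_{dR-1}, w_1, ..., w_{dR}: block index 0 is u_0, index j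
(1 <= j <= dR-1) is u_j, and index dR - 1 + i (1 <= i <= dR) is w_i.\<close>

definition mm_csz :: "nat \<Rightarrow> nat \<Rightarrow> nat \<Rightarrow> nat \<Rightarrow> nat \<Rightarrow> nat" where
  "mm_csz dR n nG rG j = (if j = 0 then n else if j < dR then nG else rG)"

abbreviation mm_nbc :: "nat \<Rightarrow> nat" where "mm_nbc dR \<equiv> 2 * dR"

definition HX_MM :: "nat \<Rightarrow> bit mat \<Rightarrow> bit mat \<Rightarrow> bit mat \<Rightarrow> bit mat" where
  "HX_MM dR HX HG T =
    (let n = dim_col HX; rX = dim_row HX; nG = dim_col HG; rG = dim_row HG;
         rsz = (\<lambda>i. if i = 0 then rX else rG); csz = mm_csz dR n nG rG
     in block_mat dR rsz (mm_nbc dR) csz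
        (\<lambda>i j. if i = 0 then
                  (if j = 0 then HX else if j = dR then T else 0\<^sub>m (rsz i) (csz j))
               else
                  (if j = i then HG
                   else if j = dR - 1 + i then 1\<^sub>m rG
                   else if j = dR + i then 1\<^sub>m rG
                   else 0\<^sub>m (rsz i) (csz j))))"

definition HZ_MM :: "nat \<Rightarrow> bit mat \<Rightarrow> bit mat \<Rightarrow> bit mat \<Rightarrow> bit mat" where
  "HZ_MM dR HZ HG S =
    (let n = dim_col HZ; rZ = dim_row HZ; nG = dim_col HG; rG = dim_row HG;
         rsz = (\<lambda>i. if i = 0 then rZ else nG); csz = mm_csz dR n nG rG
     in block_mat (Suc dR) rsz (mm_nbc dR) csz
        (\<lambda>i j. if i = 0 then
                  (if j = 0 then HZ else 0\<^sub>m (rsz i) (csz j))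
               else
                  (if i = 1 \<and> j = 0 then S
                   else if 2 \<le> i \<and> j = i - 1 then 1\<^sub>m nG
                   else if i \<le> dR - 1 \<and> j = i then 1\<^sub>m nG
                   else if j = dR - 1 + i then transpose_mat HG
                   else 0\<^sub>m (rsz i) (csz j))))"

definition JX_MM :: "nat \<Rightarrow> nat \<Rightarrow> bit mat \<Rightarrow> bit mat \<Rightarrow> bit mat \<Rightarrow> bit mat \<Rightarrow> bit mat" where
  "JX_MM dR n JXC HG S \<gamma> =
    (let nG = dim_col HG; rG = dim_row HG;
         rsz = (\<lambda>i. dim_row JXC); csz = mm_csz dR n nG rG
     in block_mat 1 rsz (mm_nbc dR) csz
        (\<lambda>i j. if j = 0 then JXC
               else if j < dR then JXC * transpose_mat S
               else if j = 2 * dR - 1 then \<gamma>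
               else 0\<^sub>m (rsz i) (csz j)))"

definition JZ_MM :: "nat \<Rightarrow> bit mat \<Rightarrow> bit mat \<Rightarrow> bit mat" where
  "JZ_MM dR JZC HG =
    (let n = dim_col JZC; nG = dim_col HG; rG = dim_row HG;
         rsz = (\<lambda>i. dim_row JZC); csz = mm_csz dR n nG rG
     in block_mat 1 rsz (mm_nbc dR) csz
        (\<lambda>i j. if j = 0 then JZC else 0\<^sub>m (rsz i) (csz j)))"

definition P_MM :: "nat \<Rightarrow> nat \<Rightarrow> nat \<Rightarrow> nat \<Rightarrow> bit mat" where
  "P_MM dR n nG rG =
    (let csz = mm_csz dR n nG rG
     in block_mat 1 (\<lambda>i. n) (mm_nbc dR) csz
        (\<lambda>i j. if j = 0 then 1\<^sub>m n else 0\<^sub>m n (csz j)))"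

end

theory Submission
  imports Defs
begin

(* y P^T restricts y to the block u_0 and x P pads x with zeros, so the identities for H_X, J_{X,C}
   and J_{Z,C} are read off the column block u_0 of the deformed matrices, where the original
   matrices sit above zero blocks.  For the two inclusions into rs H_Z^{M-M}, combine the rows of
   H_Z^{M-M} with the coefficient vector (w, x, ..., x), where H_G x = 0: this gives w H_Z + x S on
   u_0, x + x = 0 on every u_j and x H_G^T = 0 on every w_i, that is (w H_Z + x S) P.  Taking x = 0
   covers rs (H_Z P); taking w = 0 covers rs (J_{Z,A} P), because fine devisedness makes every vector
   of rs J_{Z,A} of the form x S with H_G x = 0. *)

(* By default simp rewrites + and * on bit to xor and and, which hides the ring structure. *)
declare add_bit_eq_xor[simp del] mult_bit_eq_and[simp del]

lemma bit_add_self [simp]: "(x::bit) + x = 0"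
  by (cases x) auto

lemma boff_0 [simp]: "boff sz 0 = 0"
  by (simp add: boff_def)

lemma boff_Suc: "boff sz (Suc i) = boff sz i + sz i"
  by (simp add: boff_def)

lemma boff_mono: "i \<le> j \<Longrightarrow> boff sz i \<le> boff sz j"
  by (induction j) (auto simp: boff_Suc le_Suc_eq)

lemma boff_add_less: "i < nb \<Longrightarrow> a < sz i \<Longrightarrow> boff sz i + a < boff sz nb"
  using boff_mono[of "Suc i" nb sz] by (simp add: boff_Suc)

lemma boff_add_less_first_iff: "b < sz j \<Longrightarrow> boff sz j + b < sz 0 \<longleftrightarrow> j = 0"
  using boff_mono[of 1 j sz] by (cases j) (auto simp: boff_Suc)

lemma boff_Suc_if_0 [simp]: "boff (\<lambda>i. if i = 0 then a else b) (Suc i) = a + i * b"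
  by (induction i) (simp_all add: boff_Suc)

lemma bidx_boff_add:
  assumes "i < nb" "a < sz i"
  shows "bidx sz nb (boff sz i + a) = i"
  unfolding bidx_def
proof (rule the_equality)
  show "i < nb \<and> boff sz i \<le> boff sz i + a \<and> boff sz i + a < boff sz (Suc i)"
    using assms by (simp add: boff_Suc)
next
  fix i' assume i': "i' < nb \<and> boff sz i' \<le> boff sz i + a \<and> boff sz i + a < boff sz (Suc i')"
  have False if "i' < i"
    using i' boff_mono[of "Suc i'" i sz] that by simp
  moreover have False if "i < i'"
    using i' assms boff_mono[of "Suc i" i' sz] that by (simp add: boff_Suc)
  ultimately show "i' = i" by (metis linorder_neqE_nat)
qed

lemma boff_cases:
  assumes "c < boff sz nb"
  obtains j b where "j < nb" "b < sz j" "c = boff sz j + b"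
  using assms
proof (induction nb)
  case (Suc nb)
  show ?case
  proof (cases "c < boff sz nb")
    case True
    then show ?thesis using Suc by (meson less_SucI)
  next
    case False
    then show ?thesis
      using Suc.prems by (auto simp: boff_Suc intro!: Suc.prems(1)[of nb "c - boff sz nb"])
  qed
qed simp

lemma sum_lessThan_boff: "(\<Sum>r<boff sz nb. f r) = (\<Sum>i<nb. \<Sum>a<sz i. f (boff sz i + a))"
proof (induction nb)
  case (Suc nb)
  have "(\<Sum>r<a + k. f r) = (\<Sum>r<a. f r) + (\<Sum>b<k. f (a + b))" for a k
    by (induction k) (simp_all add: add.assoc)
  then show ?case using Suc.IH by (simp add: boff_Suc)
qed simp

lemma dim_block_mat [simp]:
  "dim_row (block_mat nbr rsz nbc csz B) = boff rsz nbr"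
  "dim_col (block_mat nbr rsz nbc csz B) = boff csz nbc"
  by (simp_all add: block_mat_def)

lemma index_block_mat:
  assumes "i < nbr" "a < rsz i" "j < nbc" "b < csz j"
  shows "block_mat nbr rsz nbc csz B $$ (boff rsz i + a, boff csz j + b) = B i j $$ (a, b)"
  using assms boff_add_less[of i nbr a rsz] boff_add_less[of j nbc b csz]
  by (simp add: block_mat_def bidx_boff_add)

definition block_vec :: "nat \<Rightarrow> (nat \<Rightarrow> nat) \<Rightarrow> (nat \<Rightarrow> 'a vec) \<Rightarrow> 'a vec" where
  "block_vec nb sz v = vec (boff sz nb) (\<lambda>r. let i = bidx sz nb r in v i $ (r - boff sz i))"

lemma dim_block_vec [simp]: "dim_vec (block_vec nb sz v) = boff sz nb"
  by (simp add: block_vec_def)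

lemma index_block_vec:
  assumes "i < nb" "a < sz i"
  shows "block_vec nb sz v $ (boff sz i + a) = v i $ a"
  using boff_add_less[of i nb a sz, OF assms]
  by (simp add: block_vec_def bidx_boff_add[of i nb a sz, OF assms])

lemma dim_vm [simp]: "dim_vec (vm v M) = dim_col M"
  by (simp add: vm_def)

lemma carrier_vm: "M \<in> carrier_mat m n \<Longrightarrow> vm v M \<in> carrier_vec n"
  by (rule carrier_vecI) auto

lemma index_vm_col: "c < dim_col M \<Longrightarrow> vm v M $ c = col M c \<bullet> v"
  by (simp add: vm_def)

lemma index_vm:
  assumes "M \<in> carrier_mat m n" "v \<in> carrier_vec m" "c < n"
  shows "vm v M $ c = (\<Sum>r<m. M $$ (r, c) * v $ r)"
  using assms by (auto simp: vm_def scalar_prod_def lessThan_atLeast0)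

lemma vm_one_mat: "(v :: 'a :: comm_semiring_1 vec) \<in> carrier_vec n \<Longrightarrow> vm v (1\<^sub>m n) = v"
  by (simp add: vm_def)

lemma vm_zero_mat: "v \<in> carrier_vec m \<Longrightarrow> vm v (0\<^sub>m m n) = 0\<^sub>v n"
  by (intro eq_vecI) (auto simp: vm_def)

lemma vm_transpose_mat: "vm v (transpose_mat A) = A *\<^sub>v v"
  by (simp add: vm_def)

lemma vm_mult_mat:
  assumes "v \<in> carrier_vec m" "A \<in> carrier_mat m n" "B \<in> carrier_mat n p"
  shows "vm v (A * B) = vm (vm v A) B"
  using assms by (simp add: vm_def transpose_mult assoc_mult_mat_vec[of _ p n _ m])

lemma vm_append_rows:
  assumes v: "v \<in> carrier_vec m" and w: "w \<in> carrier_vec p"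
    and A: "A \<in> carrier_mat m n" and B: "B \<in> carrier_mat p n"
  shows "vm (v @\<^sub>v w) (A @\<^sub>r B) = vm v A + vm w B"
proof (rule eq_vecI)
  have AB: "dim_row (A @\<^sub>r B) = m + p" "dim_col (A @\<^sub>r B) = n"
    using carrier_append_rows[OF A B] by auto
  then show "dim_vec (vm (v @\<^sub>v w) (A @\<^sub>r B)) = dim_vec (vm v A + vm w B)"
    using A B by simp
  fix c assume "c < dim_vec (vm v A + vm w B)"
  then have c: "c < n" using A B by simp
  have "vm (v @\<^sub>v w) (A @\<^sub>r B) $ c = col (A @\<^sub>r B) c \<bullet> (v @\<^sub>v w)"
    using AB c by (intro index_vm_col) simp
  also have "col (A @\<^sub>r B) c = col A c @\<^sub>v col B c"
    unfolding append_rows_def using A B c by (subst col_four_block_mat) auto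
  also have "(col A c @\<^sub>v col B c) \<bullet> (v @\<^sub>v w) = col A c \<bullet> v + col B c \<bullet> w"
    using v w A B c by (intro scalar_prod_append) auto
  also have "\<dots> = (vm v A + vm w B) $ c"
    using A B c by (simp add: index_vm_col)
  finally show "vm (v @\<^sub>v w) (A @\<^sub>r B) $ c = (vm v A + vm w B) $ c" .
qed

lemma vm_zero_vec: "B \<in> carrier_mat p n \<Longrightarrow> vm (0\<^sub>v p) B = 0\<^sub>v n"
  by (intro eq_vecI) (auto simp: vm_def)

lemma vm_block_mat_index:
  assumes j: "j < nbc" "b < csz j"
    and v: "\<And>i. i < nbr \<Longrightarrow> v i \<in> carrier_vec (rsz i)"
    and B: "\<And>i. i < nbr \<Longrightarrow> B i j \<in> carrier_mat (rsz i) (csz j)"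
  shows "vm (block_vec nbr rsz v) (block_mat nbr rsz nbc csz B) $ (boff csz j + b)
           = (\<Sum>i<nbr. vm (v i) (B i j) $ b)"
proof -
  let ?M = "block_mat nbr rsz nbc csz B" and ?y = "block_vec nbr rsz v"
  have "?M \<in> carrier_mat (boff rsz nbr) (boff csz nbc)" "?y \<in> carrier_vec (boff rsz nbr)"
    by (auto intro: carrier_vecI)
  then have "vm ?y ?M $ (boff csz j + b) = (\<Sum>r<boff rsz nbr. ?M $$ (r, boff csz j + b) * ?y $ r)"
    using j boff_add_less[of j nbc b csz] by (intro index_vm) simp_all
  also have "\<dots> = (\<Sum>i<nbr. \<Sum>a<rsz i. B i j $$ (a, b) * v i $ a)"
    unfolding sum_lessThan_boff using j
    by (intro sum.cong refl) (simp add: index_block_mat index_block_vec)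
  also have "\<dots> = (\<Sum>i<nbr. vm (v i) (B i j) $ b)"
    using j v B by (intro sum.cong refl index_vm[symmetric]) simp_all
  finally show ?thesis .
qed

lemma rs_mult_mat:
  assumes "A \<in> carrier_mat m n" "B \<in> carrier_mat n p"
  shows "rs (A * B) = (\<lambda>u. vm u B) ` rs A"
  using assms unfolding rs_def by (auto simp: vm_mult_mat) (metis vm_mult_mat)

lemma rs_subset_rs_append_rows:
  assumes A: "A \<in> carrier_mat m n" and B: "B \<in> carrier_mat p n"
  shows "rs A \<subseteq> rs (A @\<^sub>r B)"
proof
  fix u assume "u \<in> rs A"
  then obtain v where v: "v \<in> carrier_vec m" and u: "u = vm v A"
    using A unfolding rs_def by auto
  have "vm (v @\<^sub>v 0\<^sub>v p) (A @\<^sub>r B) = vm v A + vm (0\<^sub>v p) B"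
    using v A B by (intro vm_append_rows) auto
  then have "u = vm (v @\<^sub>v 0\<^sub>v p) (A @\<^sub>r B)"
    using A B carrier_vm[OF A] by (simp add: u vm_zero_vec)
  then show "u \<in> rs (A @\<^sub>r B)"
    using v carrier_append_rows[OF A B] unfolding rs_def by auto
qed

lemma rs_append_zero_rows:
  assumes A: "A \<in> carrier_mat m n"
  shows "rs (A @\<^sub>r 0\<^sub>m p n) = rs A"
proof
  show "rs A \<subseteq> rs (A @\<^sub>r 0\<^sub>m p n)"
    using A zero_carrier_mat by (rule rs_subset_rs_append_rows)
  show "rs (A @\<^sub>r 0\<^sub>m p n) \<subseteq> rs A"
  proof
    fix u assume "u \<in> rs (A @\<^sub>r 0\<^sub>m p n)"
    then obtain w where w: "w \<in> carrier_vec (m + p)" and u: "u = vm w (A @\<^sub>r 0\<^sub>m p n)"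
      using carrier_append_rows[OF A zero_carrier_mat[of p n]] unfolding rs_def by auto
    have "vm (vec_first w m @\<^sub>v vec_last w p) (A @\<^sub>r 0\<^sub>m p n)
            = vm (vec_first w m) A + vm (vec_last w p) (0\<^sub>m p n)"
      using A by (intro vm_append_rows) auto
    then have "u = vm (vec_first w m) A"
      using w A carrier_vm[OF A] by (simp add: u vm_zero_mat)
    then show "u \<in> rs A"
      using A unfolding rs_def by auto
  qed
qed

definition embed_mat :: "nat \<Rightarrow> nat \<Rightarrow> 'a :: {zero, one} mat" where
  "embed_mat n N = mat n N (\<lambda>(l, c). if l = c then 1 else 0)"

lemma dim_embed_mat [simp]: "dim_row (embed_mat n N) = n" "dim_col (embed_mat n N) = N"
  by (simp_all add: embed_mat_def)

lemma embed_mat_carrier: "embed_mat n N \<in> carrier_mat n N"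
  by (simp add: carrier_matI)

lemma index_embed_mat [simp]:
  "l < n \<Longrightarrow> c < N \<Longrightarrow> embed_mat n N $$ (l, c) = (if l = c then 1 else 0)"
  by (simp add: embed_mat_def)

lemma index_vm_embed_mat:
  assumes u: "(u :: 'a :: comm_semiring_1 vec) \<in> carrier_vec n" and c: "c < N"
  shows "vm u (embed_mat n N) $ c = (if c < n then u $ c else 0)"
proof -
  have "vm u (embed_mat n N) $ c = (\<Sum>l<n. embed_mat n N $$ (l, c) * u $ l)"
    using u c embed_mat_carrier by (intro index_vm)
  also have "\<dots> = (\<Sum>l<n. if l = c then u $ l else 0)"
    using c by (intro sum.cong refl) simp
  finally show ?thesis by simp
qed

lemma index_mult_embed_mat:
  assumes A: "(A :: 'a :: comm_semiring_1 mat) \<in> carrier_mat m n" and r: "r < m" and c: "c < N"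
  shows "(A * embed_mat n N) $$ (r, c) = (if c < n then A $$ (r, c) else 0)"
proof -
  have "(A * embed_mat n N) $$ (r, c) = (\<Sum>l\<in>{0..<n}. A $$ (r, l) * embed_mat n N $$ (l, c))"
    using carrier_matD[OF A] r c by (simp add: scalar_prod_def)
  also have "\<dots> = (\<Sum>l\<in>{0..<n}. if l = c then A $$ (r, l) else 0)"
    using c by (intro sum.cong refl) simp
  finally show ?thesis by simp
qed

lemma index_mult_transpose_embed_mat:
  assumes M: "(M :: 'a :: comm_semiring_1 mat) \<in> carrier_mat m N" and r: "r < m" and c: "c < n"
    and "n \<le> N"
  shows "(M * transpose_mat (embed_mat n N)) $$ (r, c) = M $$ (r, c)"
proof -
  have "(M * transpose_mat (embed_mat n N)) $$ (r, c)
      = (\<Sum>l\<in>{0..<N}. M $$ (r, l) * embed_mat n N $$ (c, l))"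
    using carrier_matD[OF M] r c by (simp add: scalar_prod_def)
  also have "\<dots> = (\<Sum>l\<in>{0..<N}. if l = c then M $$ (r, l) else 0)"
    using c by (intro sum.cong refl) auto
  finally show ?thesis using assms by simp
qed

lemma mm_csz_0 [simp]: "mm_csz dR n nG rG 0 = n"
  by (simp add: mm_csz_def)

lemma le_boff_mm_csz: "1 \<le> dR \<Longrightarrow> n \<le> boff (mm_csz dR n nG rG) (2 * dR)"
  using boff_mono[of 1 "2 * dR" "mm_csz dR n nG rG"] by (simp add: boff_Suc)

lemma P_MM_eq_embed_mat: "P_MM dR n nG rG = embed_mat n (boff (mm_csz dR n nG rG) (2 * dR))"
proof (rule eq_matI)
  let ?csz = "mm_csz dR n nG rG"
  let ?E = "embed_mat n (boff ?csz (2 * dR)) :: bit mat"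
  fix l c assume "l < dim_row ?E" "c < dim_col ?E"
  then have l: "l < n" and c: "c < boff ?csz (2 * dR)" by simp_all
  from c obtain j b where jb: "j < 2 * dR" "b < ?csz j" "c = boff ?csz j + b" by (rule boff_cases)
  have "P_MM dR n nG rG $$ (l, c) = block_mat 1 (\<lambda>_. n) (2 * dR) ?csz
      (\<lambda>i j. if j = 0 then 1\<^sub>m n else 0\<^sub>m n (?csz j)) $$ (boff (\<lambda>_. n) 0 + l, boff ?csz j + b)"
    by (simp add: P_MM_def Let_def jb(3))
  also have "\<dots> = (if j = 0 then 1\<^sub>m n else 0\<^sub>m n (?csz j)) $$ (l, b)"
    using l jb by (subst index_block_mat) auto
  also have "\<dots> = ?E $$ (l, c)"
    using l c jb boff_add_less_first_iff[of b ?csz j] by auto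
  finally show "P_MM dR n nG rG $$ (l, c) = ?E $$ (l, c)" .
qed (simp_all add: P_MM_def Let_def boff_Suc)

lemma HX_MM_mult_transpose_P_MM:
  fixes HX HG T :: "bit mat"
  assumes HX: "HX \<in> carrier_mat rX n" and HG: "HG \<in> carrier_mat rG nG" and dR: "1 \<le> dR"
  shows "HX_MM dR HX HG T * transpose_mat (P_MM dR n nG rG) = HX @\<^sub>r 0\<^sub>m ((dR - 1) * rG) n"
proof -
  let ?rsz = "\<lambda>i::nat. if i = 0 then rX else rG" and ?csz = "mm_csz dR n nG rG"
  let ?B = "\<lambda>i j. if i = 0 then (if j = 0 then HX else if j = dR then T else 0\<^sub>m (?rsz i) (?csz j))
               else (if j = i then HG else if j = dR - 1 + i then 1\<^sub>m rG
                     else if j = dR + i then 1\<^sub>m rG else 0\<^sub>m (?rsz i) (?csz j))"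
  have M: "HX_MM dR HX HG T = block_mat dR ?rsz (2 * dR) ?csz ?B"
    using HX HG by (simp add: HX_MM_def Let_def)
  have rows: "boff ?rsz dR = rX + (dR - 1) * rG"
    using dR boff_Suc_if_0[of rX rG "dR - 1"] by simp
  have Mc: "HX_MM dR HX HG T \<in> carrier_mat (rX + (dR - 1) * rG) (boff ?csz (2 * dR))"
    unfolding M rows[symmetric] by (simp add: carrier_matI)
  have col0: "HX_MM dR HX HG T $$ (r, c) = (if r < rX then HX $$ (r, c) else 0)"
    if r: "r < rX + (dR - 1) * rG" and c: "c < n" for r c
  proof -
    from r obtain i a where ia: "i < dR" "a < ?rsz i" "r = boff ?rsz i + a"
      unfolding rows[symmetric] by (rule boff_cases)
    have "HX_MM dR HX HG T $$ (r, c) = ?B i 0 $$ (a, c)"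
      unfolding M ia(3) using ia c dR index_block_mat[of i dR a ?rsz 0 "2 * dR" c ?csz ?B] by simp
    also have "\<dots> = (if r < rX then HX $$ (r, c) else 0)"
      using ia c dR boff_add_less_first_iff[of a ?rsz i] by auto
    finally show ?thesis .
  qed
  show ?thesis (is "?L = ?R")
  proof (rule eq_matI)
    fix r c assume "r < dim_row ?R" "c < dim_col ?R"
    then have r: "r < rX + (dR - 1) * rG" and c: "c < n"
      using carrier_append_rows[OF HX zero_carrier_mat[of "(dR - 1) * rG" n]] by auto
    have "?L $$ (r, c) = HX_MM dR HX HG T $$ (r, c)"
      unfolding P_MM_eq_embed_mat using Mc r c le_boff_mm_csz[OF dR]
      by (rule index_mult_transpose_embed_mat)
    then show "?L $$ (r, c) = ?R $$ (r, c)"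
      using HX r c col0 by (simp add: append_rows_def)
  qed (use Mc HX in \<open>simp_all add: append_rows_def P_MM_eq_embed_mat\<close>)
qed

lemma JX_MM_mult_transpose_P_MM:
  fixes JXC HG S \<gamma> :: "bit mat"
  assumes JXC: "JXC \<in> carrier_mat m n" and HG: "HG \<in> carrier_mat rG nG" and dR: "1 \<le> dR"
  shows "JX_MM dR n JXC HG S \<gamma> * transpose_mat (P_MM dR n nG rG) = JXC"
proof -
  let ?csz = "mm_csz dR n nG rG"
  let ?B = "\<lambda>i j. if j = 0 then JXC else if j < dR then JXC * transpose_mat S
                 else if j = 2 * dR - 1 then \<gamma> else 0\<^sub>m m (?csz j)"
  have M: "JX_MM dR n JXC HG S \<gamma> = block_mat 1 (\<lambda>_. m) (2 * dR) ?csz ?B"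
    using JXC HG by (simp add: JX_MM_def Let_def)
  have Mc: "JX_MM dR n JXC HG S \<gamma> \<in> carrier_mat m (boff ?csz (2 * dR))"
    unfolding M by (simp add: carrier_matI boff_Suc)
  show ?thesis (is "?L = _")
  proof (rule eq_matI)
    fix r c assume "r < dim_row JXC" "c < dim_col JXC"
    then have r: "r < m" and c: "c < n" using JXC by auto
    have "?L $$ (r, c) = JX_MM dR n JXC HG S \<gamma> $$ (r, c)"
      unfolding P_MM_eq_embed_mat using Mc r c le_boff_mm_csz[OF dR]
      by (rule index_mult_transpose_embed_mat)
    also have "\<dots> = ?B 0 0 $$ (r, c)"
      unfolding M using r c dR index_block_mat[of 0 1 r "\<lambda>_. m" 0 "2 * dR" c ?csz ?B] by simp
    finally show "?L $$ (r, c) = JXC $$ (r, c)"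
      by simp
  qed (use Mc JXC in \<open>simp_all add: P_MM_eq_embed_mat\<close>)
qed

lemma JZC_mult_P_MM:
  fixes JZC HG :: "bit mat"
  assumes JZC: "JZC \<in> carrier_mat m n" and HG: "HG \<in> carrier_mat rG nG"
  shows "JZC * P_MM dR n nG rG = JZ_MM dR JZC HG"
proof -
  let ?csz = "mm_csz dR n nG rG"
  let ?B = "\<lambda>i j. if j = 0 then JZC else 0\<^sub>m m (?csz j)"
  have M: "JZ_MM dR JZC HG = block_mat 1 (\<lambda>_. m) (2 * dR) ?csz ?B"
    using JZC HG by (simp add: JZ_MM_def Let_def)
  show ?thesis
  proof (rule eq_matI)
    fix r c assume "r < dim_row (JZ_MM dR JZC HG)" "c < dim_col (JZ_MM dR JZC HG)"
    then have r: "r < m" and c: "c < boff ?csz (2 * dR)" unfolding M by (simp_all add: boff_Suc)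
    from c obtain j b where jb: "j < 2 * dR" "b < ?csz j" "c = boff ?csz j + b" by (rule boff_cases)
    have "(JZC * P_MM dR n nG rG) $$ (r, c) = (if c < n then JZC $$ (r, c) else 0)"
      unfolding P_MM_eq_embed_mat using JZC r c by (rule index_mult_embed_mat)
    also have "\<dots> = ?B 0 j $$ (r, b)"
      using r jb boff_add_less_first_iff[of b ?csz j] by auto
    also have "\<dots> = JZ_MM dR JZC HG $$ (r, c)"
      unfolding M jb(3) using r jb index_block_mat[of 0 1 r "\<lambda>_. m" j "2 * dR" b ?csz ?B] by simp
    finally show "(JZC * P_MM dR n nG rG) $$ (r, c) = JZ_MM dR JZC HG $$ (r, c)" .
  qed (use JZC in \<open>simp_all add: M P_MM_eq_embed_mat boff_Suc\<close>)
qed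

definition HZ_MM_block :: "nat \<Rightarrow> bit mat \<Rightarrow> bit mat \<Rightarrow> bit mat \<Rightarrow> nat \<Rightarrow> nat \<Rightarrow> bit mat" where
  "HZ_MM_block dR HZ HG S i j =
     (let rsz = (\<lambda>i. if i = 0 then dim_row HZ else dim_col HG);
          csz = mm_csz dR (dim_col HZ) (dim_col HG) (dim_row HG)
      in if i = 0 then (if j = 0 then HZ else 0\<^sub>m (rsz i) (csz j))
         else if i = 1 \<and> j = 0 then S
         else if 2 \<le> i \<and> j = i - 1 then 1\<^sub>m (dim_col HG)
         else if i \<le> dR - 1 \<and> j = i then 1\<^sub>m (dim_col HG)
         else if j = dR - 1 + i then transpose_mat HG
         else 0\<^sub>m (rsz i) (csz j))"

lemma HZ_MM_eq_block_mat:
  "HZ_MM dR HZ HG S = block_mat (Suc dR) (\<lambda>i. if i = 0 then dim_row HZ else dim_col HG) (2 * dR)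
     (mm_csz dR (dim_col HZ) (dim_col HG) (dim_row HG)) (HZ_MM_block dR HZ HG S)"
  unfolding HZ_MM_def HZ_MM_block_def[abs_def] Let_def ..

lemma sum_vm_HZ_MM_block:
  fixes HZ HG S :: "bit mat"
  assumes HZ: "HZ \<in> carrier_mat rZ n" and HG: "HG \<in> carrier_mat rG nG"
    and w: "w \<in> carrier_vec rZ" and x: "x \<in> carrier_vec nG" and Gx: "HG *\<^sub>v x = 0\<^sub>v rG"
    and j: "j < 2 * dR" and b: "b < mm_csz dR n nG rG j"
  shows "(\<Sum>i<Suc dR. vm (if i = 0 then w else x) (HZ_MM_block dR HZ HG S i j) $ b)
           = (if j = 0 then vm w HZ $ b + vm x S $ b else 0)"
proof -
  define f where "f i = vm (if i = 0 then w else x) (HZ_MM_block dR HZ HG S i j) $ b" for i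
  have blk: "HZ_MM_block dR HZ HG S i j =
     (if i = 0 then (if j = 0 then HZ else 0\<^sub>m rZ (mm_csz dR n nG rG j))
      else if i = 1 \<and> j = 0 then S else if 2 \<le> i \<and> j = i - 1 then 1\<^sub>m nG
      else if i \<le> dR - 1 \<and> j = i then 1\<^sub>m nG else if j = dR - 1 + i then transpose_mat HG
      else 0\<^sub>m nG (mm_csz dR n nG rG j))" for i
    using carrier_matD[OF HZ] carrier_matD[OF HG] by (simp add: HZ_MM_block_def Let_def cong: if_cong)
  consider (u0) "j = 0" | (u_block) "1 \<le> j" "j < dR" | (w_block) "dR \<le> j"
    by linarith
  then have "(\<Sum>i<Suc dR. f i) = (if j = 0 then vm w HZ $ b + vm x S $ b else 0)"
  proof cases
    case u0
    have "f i = (if i = 0 then vm w HZ $ b else 0) + (if i = 1 then vm x S $ b else 0)"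
      if "i < Suc dR" for i
      unfolding f_def blk using that u0 b w x by (auto simp: vm_zero_mat)
    then show ?thesis
      using j u0 by (simp add: sum.distrib)
  next
    case u_block
    have "f i = (if i = j then x $ b else 0) + (if i = Suc j then x $ b else 0)"
      if "i < Suc dR" for i
      unfolding f_def blk using that u_block b w x by (auto simp: mm_csz_def vm_zero_mat vm_one_mat)
    then show ?thesis
      using u_block by (simp add: sum.distrib)
  next
    case w_block
    have "f i = 0" if "i < Suc dR" for i
      unfolding f_def blk using that j w_block b w x Gx
      by (auto simp: mm_csz_def vm_zero_mat vm_transpose_mat)
    then show ?thesis
      using w_block j by simp
  qed
  then show ?thesis
    unfolding f_def .
qed

lemma vm_HZ_MM_block_vec:
  fixes HZ HG S :: "bit mat"
  assumes HZ: "HZ \<in> carrier_mat rZ n" and HG: "HG \<in> carrier_mat rG nG" and S: "S \<in> carrier_mat nG n"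
    and w: "w \<in> carrier_vec rZ" and x: "x \<in> carrier_vec nG" and Gx: "HG *\<^sub>v x = 0\<^sub>v rG"
  shows "vm (block_vec (Suc dR) (\<lambda>i. if i = 0 then rZ else nG) (\<lambda>i. if i = 0 then w else x))
             (HZ_MM dR HZ HG S)
           = vm (vm w HZ + vm x S) (P_MM dR n nG rG)"
    (is "vm ?y (HZ_MM dR HZ HG S) = vm ?u ?P")
proof (rule eq_vecI)
  let ?rsz = "\<lambda>i::nat. if i = 0 then rZ else nG" and ?csz = "mm_csz dR n nG rG"
  have M: "HZ_MM dR HZ HG S = block_mat (Suc dR) ?rsz (2 * dR) ?csz (HZ_MM_block dR HZ HG S)"
    unfolding HZ_MM_eq_block_mat carrier_matD[OF HZ] carrier_matD[OF HG] ..
  show "dim_vec (vm ?y (HZ_MM dR HZ HG S)) = dim_vec (vm ?u ?P)"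
    by (simp add: M P_MM_eq_embed_mat)
  fix c assume "c < dim_vec (vm ?u ?P)"
  then have c: "c < boff ?csz (2 * dR)"
    by (simp add: P_MM_eq_embed_mat)
  then obtain j b where j: "j < 2 * dR" and b: "b < ?csz j" and cjb: "c = boff ?csz j + b"
    by (rule boff_cases)
  have "vm ?y (HZ_MM dR HZ HG S) $ c
      = (\<Sum>i<Suc dR. vm (if i = 0 then w else x) (HZ_MM_block dR HZ HG S i j) $ b)"
    unfolding M cjb using j b w x HZ HG S
    by (intro vm_block_mat_index) (auto simp: HZ_MM_block_def mm_csz_def)
  also have "\<dots> = (if j = 0 then ?u $ b else 0)"
    using sum_vm_HZ_MM_block[OF HZ HG w x Gx j b] b carrier_matD[OF HZ] carrier_matD[OF S]
    by (cases "j = 0") simp_all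
  also have "\<dots> = vm ?u ?P $ c"
    unfolding P_MM_eq_embed_mat cjb using carrier_vm[OF HZ] carrier_vm[OF S] c b cjb
      boff_add_less_first_iff[of b ?csz j]
    by (simp add: index_vm_embed_mat)
  finally show "vm ?y (HZ_MM dR HZ HG S) $ c = vm ?u ?P $ c" .
qed

lemma rs_mult_P_MM:
  "A \<in> carrier_mat m n \<Longrightarrow> rs (A * P_MM dR n nG rG) = (\<lambda>u. vm u (P_MM dR n nG rG)) ` rs A"
  unfolding P_MM_eq_embed_mat by (rule rs_mult_mat[OF _ embed_mat_carrier])

lemma vm_P_MM_mem_rs_HZ_MM:
  fixes HZ HG S :: "bit mat"
  assumes HZ: "HZ \<in> carrier_mat rZ n" and HG: "HG \<in> carrier_mat rG nG" and S: "S \<in> carrier_mat nG n"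
    and w: "w \<in> carrier_vec rZ" and x: "x \<in> kerm HG"
  shows "vm (vm w HZ + vm x S) (P_MM dR n nG rG) \<in> rs (HZ_MM dR HZ HG S)"
proof -
  have "x \<in> carrier_vec nG" "HG *\<^sub>v x = 0\<^sub>v rG"
    using x HG by (auto simp: kerm_def)
  then have "vm (vm w HZ + vm x S) (P_MM dR n nG rG)
      = vm (block_vec (Suc dR) (\<lambda>i. if i = 0 then rZ else nG) (\<lambda>i. if i = 0 then w else x))
          (HZ_MM dR HZ HG S)"
    using vm_HZ_MM_block_vec[OF HZ HG S w] by simp
  moreover have "block_vec (Suc dR) (\<lambda>i. if i = 0 then rZ else nG) (\<lambda>i. if i = 0 then w else x)
      \<in> carrier_vec (dim_row (HZ_MM dR HZ HG S))"
    using carrier_matD[OF HZ] carrier_matD[OF HG] by (auto simp: HZ_MM_eq_block_mat intro: carrier_vecI)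
  ultimately show ?thesis
    unfolding rs_def by blast
qed

lemma rs_HZ_mult_P_MM_subset:
  fixes HZ HG S :: "bit mat"
  assumes HZ: "HZ \<in> carrier_mat rZ n" and HG: "HG \<in> carrier_mat rG nG" and S: "S \<in> carrier_mat nG n"
  shows "rs (HZ * P_MM dR n nG rG) \<subseteq> rs (HZ_MM dR HZ HG S)"
proof
  fix z assume "z \<in> rs (HZ * P_MM dR n nG rG)"
  then obtain u where "u \<in> rs HZ" and z: "z = vm u (P_MM dR n nG rG)"
    unfolding rs_mult_P_MM[OF HZ] by auto
  then obtain w where w: "w \<in> carrier_vec rZ" and u: "u = vm w HZ"
    using HZ unfolding rs_def by auto
  have "0\<^sub>v nG \<in> kerm HG"
    using HG by (auto simp: kerm_def)
  moreover have "vm w HZ + vm (0\<^sub>v nG) S = vm w HZ"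
    using HZ S carrier_vm[OF HZ] by (simp add: vm_zero_vec)
  ultimately show "z \<in> rs (HZ_MM dR HZ HG S)"
    using vm_P_MM_mem_rs_HZ_MM[OF HZ HG S w] z u by metis
qed

lemma rs_mult_P_MM_subset_rs_HZ_MM:
  fixes HZ HG S A :: "bit mat"
  assumes HZ: "HZ \<in> carrier_mat rZ n" and HG: "HG \<in> carrier_mat rG nG" and S: "S \<in> carrier_mat nG n"
    and A: "A \<in> carrier_mat m n" and rsA: "rs A \<subseteq> (\<lambda>x. vm x S) ` kerm HG"
  shows "rs (A * P_MM dR n nG rG) \<subseteq> rs (HZ_MM dR HZ HG S)"
proof
  fix z assume "z \<in> rs (A * P_MM dR n nG rG)"
  then obtain u where "u \<in> rs A" and z: "z = vm u (P_MM dR n nG rG)"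
    unfolding rs_mult_P_MM[OF A] by auto
  then obtain x where x: "x \<in> kerm HG" and u: "u = vm x S"
    using rsA by auto
  have "vm (0\<^sub>v rZ) HZ + vm x S = u"
    using HZ S carrier_vm[OF S] by (simp add: u vm_zero_vec)
  then show "z \<in> rs (HZ_MM dR HZ HG S)"
    using vm_P_MM_mem_rs_HZ_MM[OF HZ HG S zero_carrier_vec x] z by metis
qed

theorem lemma5:
  fixes n rX rZ k kg q nG rG dR :: nat
    and HX HZ JX JZ FX FZ :: "bit mat"
    and JZA JZC JXA JXC Jbar Jbar_inv :: "bit mat"
    and HG S T \<gamma> :: "bit mat"
  assumes dims:
      "HX \<in> carrier_mat rX n" "HZ \<in> carrier_mat rZ n"
      "JX \<in> carrier_mat k n" "JZ \<in> carrier_mat k n"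
      "FX \<in> carrier_mat kg n" "FZ \<in> carrier_mat kg n"
    and memX: "direct_sum3 n (kerm HX) (rs HZ) (rs JZ) (rs FZ)"
    and memZ: "direct_sum3 n (kerm HZ) (rs HX) (rs JX) (rs FX)"
    and dualJ: "JX * transpose_mat JZ = 1\<^sub>m k"
    and dualF: "FX * transpose_mat FZ = 1\<^sub>m kg"
    and qk: "q \<le> k"
    and Jbar: "Jbar \<in> carrier_mat k k" "Jbar_inv \<in> carrier_mat k k"
      "Jbar * Jbar_inv = 1\<^sub>m k" "Jbar_inv * Jbar = 1\<^sub>m k"
    and JZsplit: "JZA \<in> carrier_mat q n" "JZC \<in> carrier_mat (k - q) n"
      "JZA @\<^sub>r JZC = Jbar * JZ"
    and JXsplit: "JXA \<in> carrier_mat q n" "JXC \<in> carrier_mat (k - q) n"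
      "JXA @\<^sub>r JXC = transpose_mat Jbar_inv * JX"
    and dR: "dR \<ge> 2"
    and glue: "HG \<in> carrier_mat rG nG" "S \<in> carrier_mat nG n" "T \<in> carrier_mat rX rG"
      "HX * transpose_mat S = T * HG"
    and fine: "\<exists>m U. U \<in> carrier_mat m n \<and>
                 (\<forall>i < m. row U i \<in> set_sum (rs HZ) (rs FZ)) \<and>
                 rs (JZA @\<^sub>r U) = (\<lambda>x. vm x S) ` kerm HG"
    and gamma: "\<gamma> \<in> carrier_mat (k - q) rG" "JXC * transpose_mat S = \<gamma> * HG"
  shows
    "rs HX = rs (HX_MM dR HX HG T * transpose_mat (P_MM dR n nG rG)) \<and>
     rs (HZ * P_MM dR n nG rG) \<subseteq> rs (HZ_MM dR HZ HG S) \<and>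
     rs JXC = rs (JX_MM dR n JXC HG S \<gamma> * transpose_mat (P_MM dR n nG rG)) \<and>
     rs (JZC * P_MM dR n nG rG) = rs (JZ_MM dR JZC HG) \<and>
     rs (JZA * P_MM dR n nG rG) \<subseteq> rs (HZ_MM dR HZ HG S)"
proof -
  obtain m U where U: "U \<in> carrier_mat m n" and rsU: "rs (JZA @\<^sub>r U) = (\<lambda>x. vm x S) ` kerm HG"
    using fine by blast
  have "rs JZA \<subseteq> (\<lambda>x. vm x S) ` kerm HG"
    using rs_subset_rs_append_rows[OF JZsplit(1) U] rsU by simp
  then have "rs (JZA * P_MM dR n nG rG) \<subseteq> rs (HZ_MM dR HZ HG S)"
    by (rule rs_mult_P_MM_subset_rs_HZ_MM[OF dims(2) glue(1,2) JZsplit(1)])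
  moreover have "rs HX = rs (HX_MM dR HX HG T * transpose_mat (P_MM dR n nG rG))"
    using dR
    by (simp add: HX_MM_mult_transpose_P_MM[OF dims(1) glue(1)] rs_append_zero_rows[OF dims(1)])
  moreover have "rs JXC = rs (JX_MM dR n JXC HG S \<gamma> * transpose_mat (P_MM dR n nG rG))"
    using dR by (simp add: JX_MM_mult_transpose_P_MM[OF JXsplit(2) glue(1)])
  moreover have "rs (JZC * P_MM dR n nG rG) = rs (JZ_MM dR JZC HG)"
    by (simp add: JZC_mult_P_MM[OF JZsplit(2) glue(1)])
  moreover have "rs (HZ * P_MM dR n nG rG) \<subseteq> rs (HZ_MM dR HZ HG S)"
    by (rule rs_HZ_mult_P_MM_subset[OF dims(2) glue(1,2)])
  ultimately show ?thesis
    by blast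
qed

end
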